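(* Let $\alpha_i,\beta_i,\gamma_i,\delta_i\in(0,\pi)$ satisfy $\alpha_i\pm\beta_i\pm\gamma_i\pm\delta_i\not\equiv0\pmod{2\pi}$ for all sign choices, and suppose $M_i>0$. Then $\overline{\alpha}_i,\overline{\beta}_i,\overline{\gamma}_i,\overline{\delta}_i\in(0,\pi)$ and \[r_i,\ s_i,\ f_i,\ (r_i-1)(r_i-M_i),\ (s_i-1)(s_i-M_i),\ (f_i-1)(f_i-M_i),\ (r_i-1)(s_i-1)(f_i-1)(1-M_i)\] are all strictly positive.
   Context: $\sigma_i=(\alpha_i+\beta_i+\gamma_i+\delta_i)/2$, $\overline{\alpha}_i=\sigma_i-\alpha_i$, $\overline{\beta}_i=\sigma_i-\beta_i$, $\overline{\gamma}_i=\sigma_i-\gamma_i$, $\overline{\delta}_i=\sigma_i-\delta_i$; $a_i=\sin\alpha_i/\sin\overline{\alpha}_i$, $b_i=\sin\beta_i/\sin\overline{\beta}_i$, $c_i=\sin\gamma_i/\sin\overline{\gamma}_i$, $d_i=\sin\delta_i/\sin\overline{\delta}_i$, $M_i=a_ib_ic_id_i$, $r_i=a_id_i$, $s_i=c_id_i$, $f_i=a_ic_i$. *)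

theory Defs
  imports Complex_Main
begin

text \<open>Quantities attached to one quadruple of angles (the index i is fixed throughout).\<close>

definition sig :: "real \<Rightarrow> real \<Rightarrow> real \<Rightarrow> real \<Rightarrow> real" where
  "sig \<alpha> \<beta> \<gamma> \<delta> = (\<alpha> + \<beta> + \<gamma> + \<delta>) / 2"

definition aa :: "real \<Rightarrow> real \<Rightarrow> real \<Rightarrow> real \<Rightarrow> real" where
  "aa \<alpha> \<beta> \<gamma> \<delta> = sin \<alpha> / sin (sig \<alpha> \<beta> \<gamma> \<delta> - \<alpha>)"

definition bb :: "real \<Rightarrow> real \<Rightarrow> real \<Rightarrow> real \<Rightarrow> real" where
  "bb \<alpha> \<beta> \<gamma> \<delta> = sin \<beta> / sin (sig \<alpha> \<beta> \<gamma> \<delta> - \<beta>)"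

definition cc :: "real \<Rightarrow> real \<Rightarrow> real \<Rightarrow> real \<Rightarrow> real" where
  "cc \<alpha> \<beta> \<gamma> \<delta> = sin \<gamma> / sin (sig \<alpha> \<beta> \<gamma> \<delta> - \<gamma>)"

definition dd :: "real \<Rightarrow> real \<Rightarrow> real \<Rightarrow> real \<Rightarrow> real" where
  "dd \<alpha> \<beta> \<gamma> \<delta> = sin \<delta> / sin (sig \<alpha> \<beta> \<gamma> \<delta> - \<delta>)"

definition MM :: "real \<Rightarrow> real \<Rightarrow> real \<Rightarrow> real \<Rightarrow> real" where
  "MM \<alpha> \<beta> \<gamma> \<delta> = aa \<alpha> \<beta> \<gamma> \<delta> * bb \<alpha> \<beta> \<gamma> \<delta> * cc \<alpha> \<beta> \<gamma> \<delta> * dd \<alpha> \<beta> \<gamma> \<delta>"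

definition rr :: "real \<Rightarrow> real \<Rightarrow> real \<Rightarrow> real \<Rightarrow> real" where
  "rr \<alpha> \<beta> \<gamma> \<delta> = aa \<alpha> \<beta> \<gamma> \<delta> * dd \<alpha> \<beta> \<gamma> \<delta>"

definition ss :: "real \<Rightarrow> real \<Rightarrow> real \<Rightarrow> real \<Rightarrow> real" where
  "ss \<alpha> \<beta> \<gamma> \<delta> = cc \<alpha> \<beta> \<gamma> \<delta> * dd \<alpha> \<beta> \<gamma> \<delta>"

definition ff :: "real \<Rightarrow> real \<Rightarrow> real \<Rightarrow> real \<Rightarrow> real" where
  "ff \<alpha> \<beta> \<gamma> \<delta> = aa \<alpha> \<beta> \<gamma> \<delta> * cc \<alpha> \<beta> \<gamma> \<delta>"

end

theory Submission
  imports Defs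
begin

(* Each barred angle lies in (-pi/2, 3pi/2); two of them sum to the sum of the two complementary
   angles, in (0, 2pi), and differ by the difference of two angles, in (-pi, pi).  So if one barred
   angle fell outside (0, pi), the other three would lie inside and M would be negative.
   By the product-to-sum formula, sin alpha sin delta - sin alpha' sin delta' (primes for bars)
   equals sin sigma sin((alpha + delta - beta - gamma)/2), and the product of the four sines minus
   that of the barred ones is sin sigma times three such half signed sums.  So r - 1 and 1 - b c are
   the same nonzero number divided by positive products of barred sines, likewise for s and f, and
   1 - M is sin sigma times the three half signed sums divided by the product of all barred
   sines; each claimed quantity is then a square divided by a positive number. *)

definition bar_ratio :: "real \<Rightarrow> real \<Rightarrow> real" where
  "bar_ratio s x = sin x / sin (s - x)"

lemma sin_mult_sin_sub_half_sum:
  fixes a b c d s :: real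
  assumes "2 * s = a + b + c + d"
  shows "sin a * sin d - sin (s - a) * sin (s - d) = sin s * sin ((a + d - b - c) / 2)"
proof -
  have "s - a - (s - d) = - (a - d)" "s - a + (s - d) = b + c"
    "s - (a + d - b - c) / 2 = b + c" "s + (a + d - b - c) / 2 = a + d"
    using assms by (simp_all add: field_simps)
  then show ?thesis
    by (simp only: sin_times_sin cos_minus) (simp add: field_simps)
qed

lemma sin_prod_sub_half_sum:
  fixes a b c d s :: real
  assumes "2 * s = a + b + c + d"
  shows "sin a * sin b * sin c * sin d - sin (s - a) * sin (s - b) * sin (s - c) * sin (s - d)
    = sin s * sin ((a + d - b - c) / 2) * sin ((a + b - c - d) / 2) * sin ((a + c - b - d) / 2)"
proof -
  define t where "t = sin s * sin ((a + d - b - c) / 2)"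
  have ad: "sin a * sin d = sin (s - a) * sin (s - d) + t"
    using sin_mult_sin_sub_half_sum[OF assms] by (simp add: t_def)
  have "sin b * sin c - sin (s - b) * sin (s - c) = sin s * sin ((b + c - a - d) / 2)"
    by (rule sin_mult_sin_sub_half_sum) (use assms in simp)
  also have "(b + c - a - d) / 2 = - ((a + d - b - c) / 2)"
    by (simp add: field_simps)
  finally have bc: "sin b * sin c = sin (s - b) * sin (s - c) - t"
    by (simp add: t_def)
  have "(a + b - c - d) / 2 - (a + c - b - d) / 2 = b - c" "(a + b - c - d) / 2 + (a + c - b - d) / 2 = a - d"
    "s - b - (s - c) = - (b - c)" "s - b + (s - c) = a + d"
    "s - a - (s - d) = - (a - d)" "s - a + (s - d) = b + c"
    "s - (a + d - b - c) / 2 = b + c" "s + (a + d - b - c) / 2 = a + d"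
    using assms by (simp_all add: field_simps)
  then have key: "sin (s - b) * sin (s - c) - sin (s - a) * sin (s - d) - t
      = sin ((a + b - c - d) / 2) * sin ((a + c - b - d) / 2)"
    unfolding t_def by (simp only: sin_times_sin cos_minus) (simp add: field_simps)
  have "sin a * sin b * sin c * sin d - sin (s - a) * sin (s - b) * sin (s - c) * sin (s - d)
      = t * (sin (s - b) * sin (s - c) - sin (s - a) * sin (s - d) - t)"
  proof -
    have "sin a * sin b * sin c * sin d = (sin a * sin d) * (sin b * sin c)"
      by (simp only: ac_simps)
    then show ?thesis
      by (simp add: ad bc algebra_simps)
  qed
  also have "\<dots> = t * (sin ((a + b - c - d) / 2) * sin ((a + c - b - d) / 2))"
    by (simp only: key)
  finally show ?thesis
    by (simp only: t_def mult.assoc)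
qed

lemma sin_half_nonzero:
  fixes x :: real
  assumes "\<And>k::int. x \<noteq> 2 * pi * of_int k"
  shows "sin (x / 2) \<noteq> 0"
proof
  assume "sin (x / 2) = 0"
  then obtain k :: int where "x / 2 = of_int k * pi"
    by (auto simp: sin_zero_iff_int2)
  then have "x = 2 * pi * of_int k" by simp
  with assms show False by blast
qed

lemma sin_half_signed_sums_nonzero:
  fixes a b c d :: real
  assumes "\<forall>e1 \<in> {-1, 1::real}. \<forall>e2 \<in> {-1, 1::real}. \<forall>e3 \<in> {-1, 1::real}. \<forall>k::int.
    a + e1 * b + e2 * c + e3 * d \<noteq> 2 * pi * of_int k"
  shows "sin ((a + b + c + d) / 2) \<noteq> 0" "sin ((a + d - b - c) / 2) \<noteq> 0"
    "sin ((c + d - a - b) / 2) \<noteq> 0" "sin ((a + c - b - d) / 2) \<noteq> 0"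
proof -
  have signed: "a + e1 * b + e2 * c + e3 * d \<noteq> 2 * pi * of_int k"
    if "e1 \<in> {-1, 1}" "e2 \<in> {-1, 1}" "e3 \<in> {-1, 1}" for e1 e2 e3 k
    using assms that by blast
  show "sin ((a + b + c + d) / 2) \<noteq> 0"
    by (rule sin_half_nonzero) (use signed[of 1 1 1] in simp)
  show "sin ((a + d - b - c) / 2) \<noteq> 0"
    by (rule sin_half_nonzero) (use signed[of "-1" "-1" 1] in \<open>simp add: algebra_simps\<close>)
  show "sin ((c + d - a - b) / 2) \<noteq> 0"
  proof (rule sin_half_nonzero)
    fix k :: int
    show "c + d - a - b \<noteq> 2 * pi * of_int k"
      using signed[of 1 "-1" "-1" "- k"] by (simp add: algebra_simps)
  qed
  show "sin ((a + c - b - d) / 2) \<noteq> 0"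
    by (rule sin_half_nonzero) (use signed[of "-1" 1 "-1"] in \<open>simp add: algebra_simps\<close>)
qed

lemma half_sum_sub_in_open_pi:
  fixes a b c d s :: real
  assumes "a \<in> {0<..<pi}" "b \<in> {0<..<pi}" "c \<in> {0<..<pi}" "d \<in> {0<..<pi}"
    and "2 * s = a + b + c + d"
    and "0 < bar_ratio s a * bar_ratio s b * bar_ratio s c * bar_ratio s d"
  shows "s - a \<in> {0<..<pi}"
proof (rule ccontr)
  assume out: "s - a \<notin> {0<..<pi}"
  have "0 < sin a * sin b * sin c * sin d"
    using assms(1-4) by (simp add: sin_gt_zero)
  moreover have "bar_ratio s a * bar_ratio s b * bar_ratio s c * bar_ratio s d
      = sin a * sin b * sin c * sin d / (sin (s - a) * sin (s - b) * sin (s - c) * sin (s - d))"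
    by (simp add: bar_ratio_def)
  ultimately have bars_pos: "0 < sin (s - a) * sin (s - b) * sin (s - c) * sin (s - d)"
    using assms(6) by (simp add: zero_less_divide_iff)
  then have "s - a \<noteq> 0" "s - a \<noteq> pi"
    by auto
  with out have outside: "s - a < 0 \<or> pi < s - a"
    by auto
  have "sin (s - a) < 0"
  proof (cases "s - a < 0")
    case True
    then have "0 < sin (a - s)"
      using assms(1-5) by (intro sin_gt_zero) auto
    then show ?thesis
      by (metis minus_diff_eq neg_less_0_iff_less sin_minus)
  next
    case False
    then show ?thesis
      using outside assms(1-5) by (intro sin_lt_zero) auto
  qed
  moreover have "0 < sin (s - x)" if "x \<in> {0<..<pi}" "s - a + (s - x) \<in> {0<..<2 * pi}" for x
    using that outside assms(1) by (intro sin_gt_zero) auto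
  then have "0 < sin (s - b) * sin (s - c) * sin (s - d)"
    using assms by simp
  ultimately have "sin (s - a) * sin (s - b) * sin (s - c) * sin (s - d) < 0"
    by (simp add: mult_neg_pos mult.assoc)
  with bars_pos show False
    by simp
qed

lemma bar_ratio_mult_sub_one:
  fixes a b c d s :: real
  assumes "2 * s = a + b + c + d" "sin (s - a) \<noteq> 0" "sin (s - d) \<noteq> 0"
  shows "bar_ratio s a * bar_ratio s d - 1
    = sin s * sin ((a + d - b - c) / 2) / (sin (s - a) * sin (s - d))"
  using sin_mult_sin_sub_half_sum[OF assms(1)] assms(2,3)
  by (simp add: bar_ratio_def field_simps)

lemma bar_ratio_prod_sub_one:
  fixes a b c d s :: real
  assumes "2 * s = a + b + c + d"
    and "sin (s - a) \<noteq> 0" "sin (s - b) \<noteq> 0" "sin (s - c) \<noteq> 0" "sin (s - d) \<noteq> 0"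
  shows "bar_ratio s a * bar_ratio s b * bar_ratio s c * bar_ratio s d - 1
    = sin s * sin ((a + d - b - c) / 2) * sin ((a + b - c - d) / 2) * sin ((a + c - b - d) / 2)
      / (sin (s - a) * sin (s - b) * sin (s - c) * sin (s - d))"
  using sin_prod_sub_half_sum[OF assms(1)] assms(2-5)
  by (simp add: bar_ratio_def field_simps)

lemma bar_ratio_pair_sub_one_mult_pos:
  fixes a b c d s :: real
  assumes "2 * s = a + b + c + d"
    and "0 < sin (s - a)" "0 < sin (s - b)" "0 < sin (s - c)" "0 < sin (s - d)"
    and "0 < bar_ratio s a * bar_ratio s d"
    and "sin s \<noteq> 0" "sin ((a + d - b - c) / 2) \<noteq> 0"
  shows "0 < (bar_ratio s a * bar_ratio s d - 1)
    * (bar_ratio s a * bar_ratio s d - bar_ratio s a * bar_ratio s b * bar_ratio s c * bar_ratio s d)"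
proof -
  define e where "e = sin s * sin ((a + d - b - c) / 2)"
  have ad: "bar_ratio s a * bar_ratio s d - 1 = e / (sin (s - a) * sin (s - d))"
    unfolding e_def using assms(1,2,5) by (simp add: bar_ratio_mult_sub_one)
  have "bar_ratio s b * bar_ratio s c - 1 = sin s * sin ((b + c - a - d) / 2) / (sin (s - b) * sin (s - c))"
    using assms(1,3,4) by (intro bar_ratio_mult_sub_one) simp_all
  also have "(b + c - a - d) / 2 = - ((a + d - b - c) / 2)"
    by (simp add: field_simps)
  finally have bc: "1 - bar_ratio s b * bar_ratio s c = e / (sin (s - b) * sin (s - c))"
    by (simp add: e_def)
  have "e \<noteq> 0"
    using assms(7,8) by (simp add: e_def)
  then have "0 < bar_ratio s a * bar_ratio s d * e\<^sup>2
      / (sin (s - a) * sin (s - d) * (sin (s - b) * sin (s - c)))"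
    using assms(2-6) by simp
  also have "\<dots> = bar_ratio s a * bar_ratio s d
      * ((bar_ratio s a * bar_ratio s d - 1) * (1 - bar_ratio s b * bar_ratio s c))"
    by (simp only: ad bc) (simp add: power2_eq_square)
  also have "\<dots> = (bar_ratio s a * bar_ratio s d - 1)
      * (bar_ratio s a * bar_ratio s d - bar_ratio s a * bar_ratio s b * bar_ratio s c * bar_ratio s d)"
    by (simp add: algebra_simps)
  finally show ?thesis .
qed

lemma bar_ratio_pairs_prod_pos:
  fixes a b c d s :: real
  assumes "2 * s = a + b + c + d"
    and "0 < sin (s - a)" "0 < sin (s - b)" "0 < sin (s - c)" "0 < sin (s - d)"
    and "sin s \<noteq> 0" "sin ((a + d - b - c) / 2) \<noteq> 0" "sin ((c + d - a - b) / 2) \<noteq> 0"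
      "sin ((a + c - b - d) / 2) \<noteq> 0"
  shows "0 < (bar_ratio s a * bar_ratio s d - 1) * (bar_ratio s c * bar_ratio s d - 1)
    * (bar_ratio s a * bar_ratio s c - 1)
    * (1 - bar_ratio s a * bar_ratio s b * bar_ratio s c * bar_ratio s d)"
proof -
  define t_ad t_cd t_ac where "t_ad = sin ((a + d - b - c) / 2)"
    and "t_cd = sin ((c + d - a - b) / 2)" and "t_ac = sin ((a + c - b - d) / 2)"
  have ad: "bar_ratio s a * bar_ratio s d - 1 = sin s * t_ad / (sin (s - a) * sin (s - d))"
    unfolding t_ad_def using assms(1,2,5) by (intro bar_ratio_mult_sub_one) simp_all
  have cd: "bar_ratio s c * bar_ratio s d - 1 = sin s * t_cd / (sin (s - c) * sin (s - d))"
    unfolding t_cd_def using assms(1,4,5) by (intro bar_ratio_mult_sub_one) simp_all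
  have ac: "bar_ratio s a * bar_ratio s c - 1 = sin s * t_ac / (sin (s - a) * sin (s - c))"
    unfolding t_ac_def using assms(1,2,4) by (intro bar_ratio_mult_sub_one) simp_all
  have "bar_ratio s a * bar_ratio s b * bar_ratio s c * bar_ratio s d - 1
      = sin s * t_ad * sin ((a + b - c - d) / 2) * t_ac
        / (sin (s - a) * sin (s - b) * sin (s - c) * sin (s - d))"
    unfolding t_ad_def t_ac_def using assms(1-5) by (intro bar_ratio_prod_sub_one) simp_all
  also have "(a + b - c - d) / 2 = - ((c + d - a - b) / 2)"
    by (simp add: field_simps)
  finally have abcd: "1 - bar_ratio s a * bar_ratio s b * bar_ratio s c * bar_ratio s d
      = sin s * t_ad * t_cd * t_ac / (sin (s - a) * sin (s - b) * sin (s - c) * sin (s - d))"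
    by (simp add: t_cd_def)
  have "0 < (sin s ^ 2 * t_ad * t_cd * t_ac)\<^sup>2
      / (sin (s - a) ^ 3 * sin (s - b) * sin (s - c) ^ 3 * sin (s - d) ^ 3)"
    using assms(2-9) by (simp add: t_ad_def t_cd_def t_ac_def)
  also have "\<dots> = (bar_ratio s a * bar_ratio s d - 1) * (bar_ratio s c * bar_ratio s d - 1)
    * (bar_ratio s a * bar_ratio s c - 1)
    * (1 - bar_ratio s a * bar_ratio s b * bar_ratio s c * bar_ratio s d)"
    unfolding ad cd ac abcd by (simp add: field_simps power2_eq_square power3_eq_cube)
  finally show ?thesis .
qed

theorem lemma4:
  fixes \<alpha> \<beta> \<gamma> \<delta> :: real
  assumes "\<alpha> \<in> {0<..<pi}" "\<beta> \<in> {0<..<pi}" "\<gamma> \<in> {0<..<pi}" "\<delta> \<in> {0<..<pi}"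
    and "\<forall>e1 \<in> {-1, 1::real}. \<forall>e2 \<in> {-1, 1::real}. \<forall>e3 \<in> {-1, 1::real}. \<forall>k::int.
           \<alpha> + e1 * \<beta> + e2 * \<gamma> + e3 * \<delta> \<noteq> 2 * pi * of_int k"
    and "MM \<alpha> \<beta> \<gamma> \<delta> > 0"
  defines "\<sigma> \<equiv> sig \<alpha> \<beta> \<gamma> \<delta>"
    and "M \<equiv> MM \<alpha> \<beta> \<gamma> \<delta>" and "r \<equiv> rr \<alpha> \<beta> \<gamma> \<delta>"
    and "s \<equiv> ss \<alpha> \<beta> \<gamma> \<delta>" and "f \<equiv> ff \<alpha> \<beta> \<gamma> \<delta>"
  shows "\<sigma> - \<alpha> \<in> {0<..<pi} \<and> \<sigma> - \<beta> \<in> {0<..<pi} \<and> \<sigma> - \<gamma> \<in> {0<..<pi} \<and> \<sigma> - \<delta> \<in> {0<..<pi}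
    \<and> r > 0 \<and> s > 0 \<and> f > 0
    \<and> (r - 1) * (r - M) > 0 \<and> (s - 1) * (s - M) > 0 \<and> (f - 1) * (f - M) > 0
    \<and> (r - 1) * (s - 1) * (f - 1) * (1 - M) > 0"
proof -
  have half_sum: "2 * \<sigma> = \<alpha> + \<beta> + \<gamma> + \<delta>"
    by (simp add: \<sigma>_def sig_def)
  have ratios: "r = bar_ratio \<sigma> \<alpha> * bar_ratio \<sigma> \<delta>" "s = bar_ratio \<sigma> \<gamma> * bar_ratio \<sigma> \<delta>"
    "f = bar_ratio \<sigma> \<alpha> * bar_ratio \<sigma> \<gamma>"
    "M = bar_ratio \<sigma> \<alpha> * bar_ratio \<sigma> \<beta> * bar_ratio \<sigma> \<gamma> * bar_ratio \<sigma> \<delta>"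
    by (simp_all add: r_def s_def f_def M_def rr_def ss_def ff_def MM_def aa_def bb_def cc_def dd_def
        bar_ratio_def \<sigma>_def)
  have bars: "\<sigma> - \<alpha> \<in> {0<..<pi}" "\<sigma> - \<beta> \<in> {0<..<pi}" "\<sigma> - \<gamma> \<in> {0<..<pi}" "\<sigma> - \<delta> \<in> {0<..<pi}"
    using half_sum_sub_in_open_pi[of \<alpha> \<beta> \<gamma> \<delta> \<sigma>] half_sum_sub_in_open_pi[of \<beta> \<alpha> \<gamma> \<delta> \<sigma>]
      half_sum_sub_in_open_pi[of \<gamma> \<alpha> \<beta> \<delta> \<sigma>] half_sum_sub_in_open_pi[of \<delta> \<alpha> \<beta> \<gamma> \<sigma>]
      assms(1-4,6) half_sum ratios(4) M_def
    by (simp_all add: ac_simps)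
  then have bar_sines: "0 < sin (\<sigma> - \<alpha>)" "0 < sin (\<sigma> - \<beta>)" "0 < sin (\<sigma> - \<gamma>)" "0 < sin (\<sigma> - \<delta>)"
    by (simp_all add: sin_gt_zero)
  have nondegenerate: "sin \<sigma> \<noteq> 0" "sin ((\<alpha> + \<delta> - \<beta> - \<gamma>) / 2) \<noteq> 0"
    "sin ((\<gamma> + \<delta> - \<alpha> - \<beta>) / 2) \<noteq> 0" "sin ((\<alpha> + \<gamma> - \<beta> - \<delta>) / 2) \<noteq> 0"
    using sin_half_signed_sums_nonzero[OF assms(5)] by (simp_all add: \<sigma>_def sig_def)
  have pos: "0 < r" "0 < s" "0 < f"
    using assms(1-4) bar_sines by (simp_all add: ratios bar_ratio_def sin_gt_zero)
  show ?thesis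
    using bars pos
      bar_ratio_pair_sub_one_mult_pos[of \<sigma> \<alpha> \<beta> \<gamma> \<delta>]
      bar_ratio_pair_sub_one_mult_pos[of \<sigma> \<gamma> \<alpha> \<beta> \<delta>]
      bar_ratio_pair_sub_one_mult_pos[of \<sigma> \<alpha> \<beta> \<delta> \<gamma>]
      bar_ratio_pairs_prod_pos[of \<sigma> \<alpha> \<beta> \<gamma> \<delta>]
      half_sum bar_sines nondegenerate
    by (simp_all add: ratios ac_simps)
qed

end
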